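(* Let $\Omega\subset\mathbb{R}^3$ be open and bounded, $c_0,\tau_1,\epsilon,T>0$, $k_c:=\frac2{\tau_1c_0}$, $D:=2\big(\frac{c_0}{k_c}+\epsilon\big)T$. Then the operator $\mathcal{A}\circ\mathcal{R}_D:L^2(\Omega)\to L^2(\mathbb{R}^3)$, where $$\mathcal{A}:=\big(\mathrm{Id}+\tau_1^2c_0^2\Delta\big)^2+c_0^2\Delta\mathcal{J}_T ,$$ is injective.
   Context: Functions in $L^2(\Omega)$ are extended by zero to $\mathbb{R}^3$. $g_D(\mathbf{x})=(4\pi D)^{-3/2}e^{-|\mathbf{x}|^2/(4D)}$ and $\mathcal{R}_Df:=g_D*_{\mathbf{x}}f$. Let $\vartheta(k):=c_0k\sqrt{1-k^2/k_c^2}$. $\mathcal{J}_T$ is the spatial Fourier multiplier $\widehat{\mathcal{J}_T\xi}(\mathbf{k})=\frac{\sin^2(\vartheta(|\mathbf{k}|)T)}{\vartheta(|\mathbf{k}|)^2}\hat\xi(\mathbf{k})$ (for $|\mathbf{k}|>k_c$ the multiplier is $\sinh^2(|\vartheta|T)/|\vartheta|^2$), and $\Delta$ is the Fourier multiplier $-|\mathbf{k}|^2$. *)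

theory Defs
  imports "HOL-Analysis.Analysis"
begin

definition heat_kernel :: "real \<Rightarrow> real^3 \<Rightarrow> real" where
  "heat_kernel s x = (4 * pi * s) powr (-3/2) * exp (- (norm x)\<^sup>2 / (4 * s))"

text \<open>R_D f = g_D * f (f is already extended by zero to R^3).\<close>
definition heat_smooth :: "real \<Rightarrow> (real^3 \<Rightarrow> real) \<Rightarrow> real^3 \<Rightarrow> real" where
  "heat_smooth s f x = (\<integral>y. heat_kernel s (x - y) * f y \<partial>lborel)"

definition fourier3 :: "(real^3 \<Rightarrow> real) \<Rightarrow> real^3 \<Rightarrow> complex" where
  "fourier3 h k = (\<integral>x. cis (- (k \<bullet> x)) * complex_of_real (h x) \<partial>lborel)"

text \<open>Multiplier of J_T at radius r = |k|: sin^2(theta T)/theta^2 for r <= kc,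
  sinh^2(|theta| T)/|theta|^2 for r > kc, theta(r) = c0 r sqrt(1 - r^2/kc^2)
  (value T^2 at the removable points theta = 0).\<close>
definition J_symbol :: "real \<Rightarrow> real \<Rightarrow> real \<Rightarrow> real \<Rightarrow> real" where
  "J_symbol c0 kc T r =
     (if r \<le> kc then
        (let \<theta> = c0 * r * sqrt (1 - r\<^sup>2 / kc\<^sup>2)
         in if \<theta> = 0 then T\<^sup>2 else (sin (\<theta> * T))\<^sup>2 / \<theta>\<^sup>2)
      else
        (let \<theta> = c0 * r * sqrt (r\<^sup>2 / kc\<^sup>2 - 1)
         in (sinh (\<theta> * T))\<^sup>2 / \<theta>\<^sup>2))"

text \<open>Symbol of A = (Id + tau1^2 c0^2 Delta)^2 + c0^2 Delta J_T, Delta having symbol -|k|^2.\<close>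
definition A_symbol :: "real \<Rightarrow> real \<Rightarrow> real \<Rightarrow> real \<Rightarrow> real^3 \<Rightarrow> real" where
  "A_symbol c0 \<tau>1 kc T k =
     (1 + \<tau>1\<^sup>2 * c0\<^sup>2 * (- (norm k)\<^sup>2))\<^sup>2 + c0\<^sup>2 * (- (norm k)\<^sup>2) * J_symbol c0 kc T (norm k)"

definition L2_on :: "(real^3) set \<Rightarrow> (real^3 \<Rightarrow> real) set" where
  "L2_on \<Omega> = {f. f \<in> borel_measurable lborel \<and> integrable lborel (\<lambda>x. (f x)\<^sup>2)
                   \<and> (\<forall>x. x \<notin> \<Omega> \<longrightarrow> f x = 0)}"

end

theory Submission
  imports Defs "HOL-Probability.Probability" "HOL-Complex_Analysis.Complex_Analysis"
begin

text \<open>The heat kernel has Fourier transform \<open>exp (-D |k|\<^sup>2)\<close>, so by the convolution theorem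
  the hypothesis says that \<open>A(k) exp (-D |k|\<^sup>2) (\<F>f(k) - \<F>g(k)) = 0\<close> almost everywhere. For
  \<open>|k| \<le> k\<^sub>c\<close> and for \<open>|k| > k\<^sub>c\<close> alike, the symbol \<open>A(k)\<close> is the value at \<open>|k|\<close> of one entire
  function with value \<open>1\<close> at \<open>0\<close>: both \<open>sin \<theta> / \<theta>\<close> and \<open>sinh \<theta> / \<theta>\<close> are values of the entire
  function \<open>w \<mapsto> sin (\<surd>w) / \<surd>w\<close>, at \<open>w = \<theta>\<^sup>2\<close> and \<open>w = -\<theta>\<^sup>2\<close>. Its zeros are countable, so
  \<open>A\<close> vanishes only on countably many spheres, and \<open>\<F>f = \<F>g\<close> almost everywhere, hence
  everywhere by continuity. Finally \<open>f - g\<close> is integrable with compact support and has vanishing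
  Fourier transform. By Stone--Weierstrass, trigonometric polynomials approximate every continuous
  function on the support, so \<open>f - g\<close> integrates to zero against continuous functions, hence
  against indicators of open sets, hence it vanishes almost everywhere.\<close>

lemma emeasure_density_eq_integral:
  fixes f :: "'a \<Rightarrow> real"
  assumes "A \<in> sets M" "f \<in> borel_measurable M" "integrable M (\<lambda>x. indicator A x * f x)"
    and "\<And>x. f x \<ge> 0"
  shows "emeasure (density M f) A = ennreal (\<integral>x. indicator A x * f x \<partial>M)"
proof -
  have "emeasure (density M f) A = (\<integral>\<^sup>+x. ennreal (indicator A x * f x) \<partial>M)"
    using assms(1,2) by (simp add: emeasure_density) (auto intro!: nn_integral_cong simp: indicator_def)
  also have "\<dots> = ennreal (\<integral>x. indicator A x * f x \<partial>M)"
    using assms by (intro nn_integral_eq_integral) auto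
  finally show ?thesis .
qed

lemma AE_zero_if_integral_open_eq_0:
  fixes h :: "'a::euclidean_space \<Rightarrow> real"
  assumes h: "integrable lborel h"
    and open_0: "\<And>U. open U \<Longrightarrow> (\<integral>x. indicator U x * h x \<partial>lborel) = 0"
  shows "AE x in lborel. h x = 0"
proof -
  define pos neg where "pos x = max (h x) 0" and "neg x = max (- h x) 0" for x
  have pos_neg: "integrable lborel pos" "integrable lborel neg" "pos x \<ge> 0" "neg x \<ge> 0" for x
    unfolding pos_def neg_def using h by (auto intro!: integrable_max)
  then have [measurable]: "pos \<in> borel_measurable borel" "neg \<in> borel_measurable borel"
    by auto
  have int_pos_neg: "integrable lborel (\<lambda>x. indicator U x * pos x)"
    "integrable lborel (\<lambda>x. indicator U x * neg x)" if "U \<in> sets borel" for U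
    using integrable_real_mult_indicator[of U lborel] that pos_neg by (simp_all add: mult.commute)
  have eq_on_open: "emeasure (density lborel pos) U = emeasure (density lborel neg) U"
    if "open U" for U
  proof -
    have "indicator U x * h x = indicator U x * pos x - indicator U x * neg x" for x
      by (auto simp: pos_def neg_def indicator_def)
    then have "(\<integral>x. indicator U x * pos x \<partial>lborel) = (\<integral>x. indicator U x * neg x \<partial>lborel)"
      using open_0[OF that] int_pos_neg that by simp
    then show ?thesis
      using that int_pos_neg by (simp add: emeasure_density_eq_integral pos_neg)
  qed
  have "density lborel pos = density lborel neg"
  proof (rule measure_eqI_generator_eq[where E="{U. open U}" and \<Omega>=UNIV and A="\<lambda>_. UNIV"])
    show "Int_stable {U::'a set. open U}" by (auto simp: Int_stable_def)
    show "sets (density lborel pos) = sigma_sets UNIV {U. open U}"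
      "sets (density lborel neg) = sigma_sets UNIV {U. open U}"
      by (simp_all add: borel_def sets_measure_of)
    show "emeasure (density lborel pos) UNIV \<noteq> \<infinity>"
      using int_pos_neg[of UNIV] by (simp add: emeasure_density_eq_integral pos_neg)
  qed (auto intro: eq_on_open)
  then have "AE x in lborel. ennreal (pos x) = ennreal (neg x)"
    using sigma_finite_measure.density_unique_iff[OF sigma_finite_lborel,
        of "\<lambda>x. ennreal (pos x)" "\<lambda>x. ennreal (neg x)"]
    by simp
  then show ?thesis
    by eventually_elim (auto simp: pos_def neg_def max_def split: if_splits)
qed

lemma continuous_approx_indicator_open:
  fixes U :: "'a::metric_space set"
  assumes U: "open U"
  obtains \<phi> :: "nat \<Rightarrow> 'a \<Rightarrow> real"
  where "\<And>n. continuous_on UNIV (\<phi> n)" "\<And>n x. \<bar>\<phi> n x\<bar> \<le> 1"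
    "\<And>x. (\<lambda>n. \<phi> n x) \<longlonglongrightarrow> indicator U x"
proof (cases "U = UNIV")
  case True
  then show ?thesis by (intro that[of "\<lambda>_ _. 1"]) (auto intro: continuous_on_const)
next
  case False
  define \<phi> where "\<phi> n x = min 1 (real n * infdist x (- U))" for n x
  have "continuous_on UNIV (\<phi> n)" for n
    unfolding \<phi>_def
    by (intro continuous_intros continuous_infdist continuous_at_imp_continuous_on) auto
  moreover have "\<bar>\<phi> n x\<bar> \<le> 1" for n x
    unfolding \<phi>_def using infdist_nonneg[of x "- U"] by auto
  moreover have "(\<lambda>n. \<phi> n x) \<longlonglongrightarrow> indicator U x" for x
  proof (cases "x \<in> U")
    case True
    then have d: "infdist x (- U) > 0"
      using infdist_pos_not_in_closed[of "- U" x] U False by auto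
    obtain N :: nat where "1 / infdist x (- U) < N" using reals_Archimedean2 by blast
    then have "real n * infdist x (- U) \<ge> 1" if "n \<ge> N" for n
      using that d by (smt (verit) divide_less_eq mult_right_mono of_nat_mono)
    then have "eventually (\<lambda>n. \<phi> n x = 1) sequentially"
      unfolding \<phi>_def eventually_sequentially by (intro exI[of _ N]) auto
    then show ?thesis using True by (simp add: tendsto_eventually)
  next
    case False
    then show ?thesis by (simp add: \<phi>_def)
  qed
  ultimately show ?thesis by (rule that)
qed

lemma integral_indicator_open_eq_0:
  fixes h :: "'a::euclidean_space \<Rightarrow> real"
  assumes h: "integrable lborel h"
    and continuous_0: "\<And>\<phi>. continuous_on UNIV \<phi> \<Longrightarrow> (\<And>x. \<bar>\<phi> x\<bar> \<le> 1) \<Longrightarrow>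
          (\<integral>x. \<phi> x * h x \<partial>lborel) = 0"
    and U: "open U"
  shows "(\<integral>x. indicator U x * h x \<partial>lborel) = 0"
proof -
  obtain \<phi> :: "nat \<Rightarrow> 'a \<Rightarrow> real" where \<phi>_cont: "\<And>n. continuous_on UNIV (\<phi> n)" and \<phi>_bound: "\<And>n x. \<bar>\<phi> n x\<bar> \<le> 1"
    and \<phi>_lim: "\<And>x. (\<lambda>n. \<phi> n x) \<longlonglongrightarrow> indicator U x"
    using continuous_approx_indicator_open[OF U] by metis
  have [measurable]: "h \<in> borel_measurable borel" using h by auto
  have [measurable]: "\<phi> n \<in> borel_measurable borel" for n
    using \<phi>_cont by (intro borel_measurable_continuous_onI)
  have "(\<lambda>n. \<integral>x. \<phi> n x * h x \<partial>lborel) \<longlonglongrightarrow> (\<integral>x. indicator U x * h x \<partial>lborel)"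
  proof (rule integral_dominated_convergence[where w="\<lambda>x. norm (h x)"])
    show "AE x in lborel. (\<lambda>n. \<phi> n x * h x) \<longlonglongrightarrow> indicator U x * h x"
      by (intro AE_I2 tendsto_mult \<phi>_lim tendsto_const)
    show "AE x in lborel. norm (\<phi> n x * h x) \<le> norm (h x)" for n
      using \<phi>_bound by (auto simp: abs_mult intro!: mult_left_le_one_le)
  qed (use h U in auto)
  then show ?thesis using continuous_0[OF \<phi>_cont \<phi>_bound] by (simp add: LIMSEQ_const_iff)
qed

section \<open>Trigonometric polynomials\<close>

definition cis_sum :: "(complex \<times> 'a::real_inner) list \<Rightarrow> 'a \<Rightarrow> complex" where
  "cis_sum cs x = (\<Sum>(c, w)\<leftarrow>cs. c * cis (w \<bullet> x))"

definition trig_poly :: "(complex \<times> 'a::real_inner) list \<Rightarrow> 'a \<Rightarrow> real" where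
  "trig_poly cs x = Re (cis_sum cs x)"

lemma cis_sum_Nil [simp]: "cis_sum [] x = 0"
  by (simp add: cis_sum_def)

lemma cis_sum_Cons [simp]: "cis_sum ((c, w) # cs) x = c * cis (w \<bullet> x) + cis_sum cs x"
  by (simp add: cis_sum_def)

lemma cis_sum_append [simp]: "cis_sum (cs @ ds) x = cis_sum cs x + cis_sum ds x"
  by (simp add: cis_sum_def)

lemma cis_sum_cnj: "cis_sum (map (\<lambda>(c, w). (cnj c, - w)) cs) x = cnj (cis_sum cs x)"
  by (induction cs) (auto simp: cis_cnj)

lemma cis_sum_scale: "cis_sum (map (\<lambda>(c, w). (a * c, w)) cs) x = a * cis_sum cs x"
  by (induction cs) (auto simp: algebra_simps)

lemma cis_sum_mult:
  "cis_sum (concat (map (\<lambda>(c, w). map (\<lambda>(d, v). (c * d, w + v)) ds) cs)) x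
     = cis_sum cs x * cis_sum ds x"
proof -
  have shift: "cis_sum (map (\<lambda>(d, v). (c * d, w + v)) ds) x = c * cis (w \<bullet> x) * cis_sum ds x"
    for c w
    by (induction ds) (auto simp: inner_add_left cis_mult[symmetric] algebra_simps)
  show ?thesis by (induction cs) (auto simp: shift algebra_simps)
qed

lemma continuous_on_cis_sum: "continuous_on S (cis_sum cs)"
  by (induction cs) (auto simp: cis_sum_def[symmetric] intro!: continuous_intros)

lemma trig_poly_separates_points:
  fixes x y :: "'a::real_inner"
  assumes "x \<noteq> y"
  shows "\<exists>cs. trig_poly cs x \<noteq> trig_poly cs y"
proof -
  define w where "w = (pi / (norm (x - y))\<^sup>2) *\<^sub>R (x - y)"
  have "w \<bullet> x - w \<bullet> y = w \<bullet> (x - y)" by (simp add: inner_diff_right)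
  also have "\<dots> = pi / (norm (x - y))\<^sup>2 * ((x - y) \<bullet> (x - y))" by (simp add: w_def)
  also have "\<dots> = pi" using assms by (simp add: power2_norm_eq_inner)
  finally have "w \<bullet> x - w \<bullet> y = pi" .
  then have "w \<bullet> y = w \<bullet> x - pi" by simp
  then have cs_y: "cos (w \<bullet> y) = - cos (w \<bullet> x)" "sin (w \<bullet> y) = - sin (w \<bullet> x)"
    by (simp_all add: cos_diff sin_diff)
  show ?thesis
  proof (cases "cos (w \<bullet> x) = 0")
    case True
    then have "sin (w \<bullet> x) \<noteq> 0" using sin_cos_squared_add[of "w \<bullet> x"] by auto
    then have "trig_poly [(-\<i>, w)] x \<noteq> trig_poly [(-\<i>, w)] y" by (simp add: trig_poly_def cs_y)
    then show ?thesis by blast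
  next
    case False
    then have "trig_poly [(1, w)] x \<noteq> trig_poly [(1, w)] y" by (simp add: trig_poly_def cs_y)
    then show ?thesis by blast
  qed
qed

lemma function_ring_on_trig_poly:
  fixes K :: "'a::euclidean_space set"
  assumes "compact K"
  shows "function_ring_on (range trig_poly) K"
proof
  fix f g :: "'a \<Rightarrow> real" assume "f \<in> range trig_poly" "g \<in> range trig_poly"
  then obtain cs ds where f: "f = trig_poly cs" and g: "g = trig_poly ds" by auto
  show "(\<lambda>x. f x + g x) \<in> range trig_poly"
    by (rule range_eqI[of _ _ "cs @ ds"]) (simp add: f g trig_poly_def fun_eq_iff)
  let ?prod = "\<lambda>ds. concat (map (\<lambda>(c, w). map (\<lambda>(d, v). (c * d, w + v)) ds) cs)"
  let ?es = "map (\<lambda>(c, w). (1/2 * c, w)) (?prod ds @ ?prod (map (\<lambda>(c, w). (cnj c, - w)) ds))"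
  have "Re a * Re b = Re (1/2 * (a * b + a * cnj b))" for a b :: complex
    by (simp add: field_simps)
  then have "(\<lambda>x. f x * g x) = trig_poly ?es"
    unfolding f g trig_poly_def cis_sum_scale cis_sum_append cis_sum_mult cis_sum_cnj
    by (simp add: fun_eq_iff)
  then show "(\<lambda>x. f x * g x) \<in> range trig_poly" by blast
next
  fix c :: real
  show "(\<lambda>_. c) \<in> range trig_poly"
    by (rule range_eqI[of _ _ "[(complex_of_real c, 0)]"]) (simp add: trig_poly_def fun_eq_iff)
next
  fix x y :: 'a assume "x \<noteq> y"
  then show "\<exists>f\<in>range trig_poly. f x \<noteq> f y" using trig_poly_separates_points by blast
qed (auto simp: assms trig_poly_def intro!: continuous_intros continuous_on_cis_sum)

section \<open>Uniqueness of the Fourier transform\<close>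

lemma borel_measurable_cis [measurable]: "cis \<in> borel_measurable borel"
  by (intro borel_measurable_continuous_onI) (simp add: cis_conv_exp continuous_intros)

lemma integrable_cis_mult:
  fixes h :: "'a::euclidean_space \<Rightarrow> real"
  assumes "integrable lborel h"
  shows "integrable lborel (\<lambda>x. cis (w \<bullet> x) * complex_of_real (h x))"
proof (rule Bochner_Integration.integrable_bound[OF assms])
  show "(\<lambda>x. cis (w \<bullet> x) * complex_of_real (h x)) \<in> borel_measurable lborel"
    using assms by measurable
qed (simp add: norm_mult)

lemma integral_trig_poly_mult_eq_0:
  fixes h :: "'a::euclidean_space \<Rightarrow> real"
  assumes h: "integrable lborel h"
    and cis_0: "\<And>w. (\<integral>x. cis (w \<bullet> x) * complex_of_real (h x) \<partial>lborel) = 0"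
  shows "integrable lborel (\<lambda>x. trig_poly cs x * h x)" "(\<integral>x. trig_poly cs x * h x \<partial>lborel) = 0"
proof -
  have complex: "integrable lborel (\<lambda>x. cis_sum cs x * complex_of_real (h x))
      \<and> (\<integral>x. cis_sum cs x * complex_of_real (h x) \<partial>lborel) = 0"
  proof (induction cs)
    case (Cons cw cs)
    obtain c w where "cw = (c, w)" by fastforce
    moreover have "cis_sum ((c, w) # cs) x * complex_of_real (h x)
        = c * (cis (w \<bullet> x) * complex_of_real (h x)) + cis_sum cs x * complex_of_real (h x)" for x
      by (simp add: algebra_simps)
    ultimately show ?case
      using Cons integrable_cis_mult[OF h, of w] cis_0[of w] by simp
  qed simp
  have Re_eq: "(\<lambda>x. trig_poly cs x * h x) = (\<lambda>x. Re (cis_sum cs x * complex_of_real (h x)))"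
    by (simp add: trig_poly_def fun_eq_iff)
  show "integrable lborel (\<lambda>x. trig_poly cs x * h x)"
    unfolding Re_eq using complex by (intro integrable_Re) auto
  show "(\<integral>x. trig_poly cs x * h x \<partial>lborel) = 0"
    unfolding Re_eq using complex by (subst integral_Re) auto
qed

lemma integral_continuous_mult_eq_0:
  fixes h :: "'a::euclidean_space \<Rightarrow> real"
  assumes h: "integrable lborel h" and K: "compact K" and outside: "\<And>x. x \<notin> K \<Longrightarrow> h x = 0"
    and cis_0: "\<And>w. (\<integral>x. cis (w \<bullet> x) * complex_of_real (h x) \<partial>lborel) = 0"
    and \<phi>: "continuous_on UNIV \<phi>" and \<phi>_bound: "\<And>x. \<bar>\<phi> x\<bar> \<le> 1"
  shows "(\<integral>x. \<phi> x * h x \<partial>lborel) = 0"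
proof -
  interpret function_ring_on "range trig_poly" K using function_ring_on_trig_poly[OF K] .
  have [measurable]: "h \<in> borel_measurable borel" "\<phi> \<in> borel_measurable borel"
    using h \<phi> by (auto intro: borel_measurable_continuous_onI)
  have \<phi>h: "integrable lborel (\<lambda>x. \<phi> x * h x)"
    by (rule Bochner_Integration.integrable_bound[OF h])
      (use \<phi>_bound in \<open>auto simp: abs_mult intro!: mult_left_le_one_le\<close>)
  define L where "L = (\<integral>x. \<bar>h x\<bar> \<partial>lborel) + 1"
  have "L > 0" unfolding L_def by (smt (verit) integral_nonneg_AE AE_I2 abs_ge_zero)
  have "\<bar>\<integral>x. \<phi> x * h x \<partial>lborel\<bar> \<le> 0 + e" if "e > 0" for e
  proof -
    obtain cs where approx: "\<forall>x\<in>K. \<bar>\<phi> x - trig_poly cs x\<bar> < e / L"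
      using Stone_Weierstrass_basic[of \<phi> "e / L"] \<open>e > 0\<close> \<open>L > 0\<close> \<phi> continuous_on_subset
      by fastforce
    note trig = integral_trig_poly_mult_eq_0[OF h cis_0, of cs]
    have diff: "integrable lborel (\<lambda>x. (\<phi> x - trig_poly cs x) * h x)"
      using \<phi>h trig by (simp add: left_diff_distrib)
    have pointwise: "\<bar>(\<phi> x - trig_poly cs x) * h x\<bar> \<le> e / L * \<bar>h x\<bar>" for x
    proof (cases "x \<in> K")
      case True
      then have "\<bar>\<phi> x - trig_poly cs x\<bar> \<le> e / L" using approx by (simp add: less_imp_le)
      then show ?thesis unfolding abs_mult by (rule mult_right_mono) simp
    qed (simp add: outside)
    have "(\<integral>x. \<phi> x * h x \<partial>lborel) = (\<integral>x. (\<phi> x - trig_poly cs x) * h x \<partial>lborel)"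
      using \<phi>h trig by (simp add: left_diff_distrib)
    also have "\<bar>\<dots>\<bar> \<le> (\<integral>x. \<bar>(\<phi> x - trig_poly cs x) * h x\<bar> \<partial>lborel)"
      using integral_norm_bound[of lborel "\<lambda>x. (\<phi> x - trig_poly cs x) * h x"] by simp
    also have "\<dots> \<le> (\<integral>x. e / L * \<bar>h x\<bar> \<partial>lborel)"
      using diff h by (intro integral_mono pointwise) auto
    also have "\<dots> = e / L * (L - 1)" by (simp add: L_def)
    also have "\<dots> \<le> e" using \<open>e > 0\<close> \<open>L > 0\<close> by (simp add: field_simps)
    finally show ?thesis by simp
  qed
  then show ?thesis using field_le_epsilon[of "\<bar>\<integral>x. \<phi> x * h x \<partial>lborel\<bar>" 0] by simp
qed

theorem fourier_uniqueness_compact_support: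
  fixes h :: "'a::euclidean_space \<Rightarrow> real"
  assumes "integrable lborel h" and "compact K" and "\<And>x. x \<notin> K \<Longrightarrow> h x = 0"
    and "\<And>w. (\<integral>x. cis (w \<bullet> x) * complex_of_real (h x) \<partial>lborel) = 0"
  shows "AE x in lborel. h x = 0"
  using assms
  by (intro AE_zero_if_integral_open_eq_0 integral_indicator_open_eq_0 integral_continuous_mult_eq_0)

section \<open>The heat kernel and its Fourier transform\<close>

lemma has_bochner_integral_cis_gaussian:
  fixes D s :: real
  assumes D: "D > 0"
  shows "has_bochner_integral lborel
           (\<lambda>t. cis (- (s * t)) * complex_of_real ((4*pi*D) powr (-1/2) * exp (- t\<^sup>2 / (4*D))))
           (complex_of_real (exp (- D * s\<^sup>2)))"
proof -
  text \<open>The Gaussian is the normal density with variance \<open>2D\<close>; its transform is a value of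
    the characteristic function of the standard normal distribution.\<close>
  define \<sigma> where "\<sigma> = sqrt (2 * D)"
  have \<sigma>: "\<sigma> > 0" "\<sigma>\<^sup>2 = 2 * D" using D by (simp_all add: \<sigma>_def)
  have gauss: "(4*pi*D) powr (-1/2) * exp (- t\<^sup>2 / (4*D)) = normal_density 0 \<sigma> t" for t
  proof -
    have "(4*pi*D) powr (-1/2) = 1 / sqrt (2 * pi * \<sigma>\<^sup>2)"
      using D by (simp add: \<sigma>(2) powr_minus_divide powr_half_sqrt[symmetric] powr_minus mult.assoc)
    then show ?thesis unfolding normal_density_def using \<sigma> by (simp add: mult.commute)
  qed
  have integrable: "integrable lborel (\<lambda>t. cis (- (s * t)) * complex_of_real (normal_density 0 \<sigma> t))"
    by (rule Bochner_Integration.integrable_bound[OF integrable_normal_density[OF \<sigma>(1)]])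
      (auto simp: norm_mult)
  have rescale: "\<sigma> *\<^sub>R (cis (- (s * (0 + \<sigma> * x))) * complex_of_real (normal_density 0 \<sigma> (0 + \<sigma> * x)))
      = std_normal_density x *\<^sub>R iexp (- (s * \<sigma>) * x)" for x
  proof -
    have "\<sigma> * normal_density 0 \<sigma> (\<sigma> * x) = std_normal_density x"
      using \<sigma>(1) by (simp add: normal_density_def power_mult_distrib real_sqrt_mult field_simps)
    then show ?thesis
      by (simp add: scaleR_conv_of_real cis_conv_exp mult_ac flip: of_real_mult)
  qed
  have "(\<integral>t. cis (- (s * t)) * complex_of_real (normal_density 0 \<sigma> t) \<partial>lborel)
      = \<bar>\<sigma>\<bar> *\<^sub>R (\<integral>x. cis (- (s * (0 + \<sigma> * x))) * complex_of_real (normal_density 0 \<sigma> (0 + \<sigma> * x)) \<partial>lborel)"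
    using \<sigma> by (intro lborel_integral_real_affine) simp
  also have "\<dots> = (\<integral>x. std_normal_density x *\<^sub>R iexp (- (s * \<sigma>) * x) \<partial>lborel)"
    using \<sigma> rescale by (simp flip: integral_scaleR_right)
  also have "\<dots> = char std_normal_distribution (- (s * \<sigma>))"
    unfolding char_def by (subst integral_density) (auto simp: normal_density_nonneg)
  also have "\<dots> = complex_of_real (exp (- D * s\<^sup>2))"
    by (simp add: char_std_normal_distribution power_mult_distrib \<sigma>(2))
  finally show ?thesis
    using integrable unfolding gauss has_bochner_integral_iff by simp
qed

lemma has_bochner_integral_lborel_prod_Basis:
  fixes G :: "'a::euclidean_space \<Rightarrow> 'b::{real_normed_field, banach, second_countable_topology}"
  assumes [measurable]: "G \<in> borel_measurable borel"
    and G: "\<And>y. G (\<Sum>b\<in>Basis. y b *\<^sub>R b) = (\<Prod>b\<in>Basis. g b (y b))"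
    and g: "\<And>b. b \<in> Basis \<Longrightarrow> has_bochner_integral lborel (g b) (I b)"
  shows "has_bochner_integral lborel G (\<Prod>b\<in>Basis. I b)"
proof -
  interpret product_sigma_finite "\<lambda>_::'a. lborel :: real measure" by standard
  define T where "T = (\<lambda>y::'a \<Rightarrow> real. \<Sum>b\<in>Basis. y b *\<^sub>R b)"
  have [measurable]: "T \<in> measurable (\<Pi>\<^sub>M b\<in>Basis. lborel) borel"
    unfolding T_def by measurable
  have "integrable (\<Pi>\<^sub>M b\<in>Basis. lborel) (\<lambda>y. G (T y))"
    unfolding T_def G using g by (intro product_integrable_prod) (auto simp: has_bochner_integral_iff)
  then have integrable: "integrable lborel G"
    by (subst lborel_eq) (simp add: integrable_distr_eq T_def[symmetric])
  have "(\<integral>z. G z \<partial>lborel) = (\<integral>y. G (T y) \<partial>(\<Pi>\<^sub>M b\<in>Basis. lborel))"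
    by (subst lborel_eq) (simp add: integral_distr T_def[symmetric])
  also have "\<dots> = (\<Prod>b\<in>Basis. I b)"
    unfolding T_def G using g by (subst product_integral_prod) (auto simp: has_bochner_integral_iff)
  finally show ?thesis using integrable by (simp add: has_bochner_integral_iff)
qed

lemma has_bochner_integral_cis_gaussian_euclidean:
  fixes k :: "'a::euclidean_space" and D :: real
  assumes D: "D > 0"
  shows "has_bochner_integral lborel
           (\<lambda>z. cis (- (k \<bullet> z)) * complex_of_real ((4*pi*D) powr (- real DIM('a) / 2) * exp (- (norm z)\<^sup>2 / (4*D))))
           (complex_of_real (exp (- D * (norm k)\<^sup>2)))"
    (is "has_bochner_integral lborel ?G _")
proof -
  define g1 where "g1 s t = cis (- (s * t)) * complex_of_real ((4*pi*D) powr (-1/2) * exp (- t\<^sup>2 / (4*D)))"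
    for s t
  define T where "T = (\<lambda>y::'a \<Rightarrow> real. \<Sum>b\<in>Basis. y b *\<^sub>R b)"
  have T_Basis: "T y \<bullet> b = y b" if "b \<in> Basis" for y b
    unfolding T_def using that by (simp add: inner_sum_left inner_Basis if_distrib cong: if_cong)
  have norm_T: "(norm (T y))\<^sup>2 = (\<Sum>b\<in>Basis. (y b)\<^sup>2)" for y
  proof -
    have "(norm (T y))\<^sup>2 = T y \<bullet> (\<Sum>b\<in>Basis. y b *\<^sub>R b)"
      by (simp add: power2_norm_eq_inner T_def)
    also have "\<dots> = (\<Sum>b\<in>Basis. (y b)\<^sup>2)"
      by (simp add: inner_sum_right T_Basis power2_eq_square)
    finally show ?thesis .
  qed
  have G_prod: "?G (T y) = (\<Prod>b\<in>Basis. g1 (k \<bullet> b) (y b))" for y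
  proof -
    have "cis (- (k \<bullet> T y)) = (\<Prod>b\<in>Basis. cis (- ((k \<bullet> b) * y b)))"
      unfolding T_def cis_conv_exp
      by (simp add: inner_sum_right mult.commute exp_sum[symmetric] of_real_sum sum_distrib_left sum_negf)
    moreover have "(4*pi*D) powr (- real DIM('a) / 2) = (\<Prod>b\<in>(Basis::'a set). (4*pi*D) powr (-1/2))"
      using D by (simp add: powr_power)
    moreover have "exp (- (norm (T y))\<^sup>2 / (4*D)) = (\<Prod>b\<in>Basis. exp (- (y b)\<^sup>2 / (4*D)))"
      unfolding norm_T by (simp add: exp_sum[symmetric] sum_negf[symmetric] sum_divide_distrib)
    ultimately show ?thesis by (simp add: g1_def prod.distrib of_real_prod)
  qed
  have "(norm k)\<^sup>2 = (\<Sum>b\<in>Basis. (k \<bullet> b)\<^sup>2)"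
    using euclidean_inner[of k k] by (simp add: power2_norm_eq_inner power2_eq_square flip: power2_eq_square)
  then have "(\<Prod>b\<in>Basis. complex_of_real (exp (- D * (k \<bullet> b)\<^sup>2))) = complex_of_real (exp (- D * (norm k)\<^sup>2))"
    by (simp add: exp_sum sum_distrib_left of_real_prod flip: sum_negf)
  moreover have "has_bochner_integral lborel ?G (\<Prod>b\<in>Basis. complex_of_real (exp (- D * (k \<bullet> b)\<^sup>2)))"
  proof (rule has_bochner_integral_lborel_prod_Basis)
    show "?G \<in> borel_measurable borel"
      using D by (intro borel_measurable_continuous_onI) (simp add: cis_conv_exp continuous_intros)
  qed (use G_prod has_bochner_integral_cis_gaussian[OF D] in \<open>simp_all add: T_def g1_def\<close>)
  ultimately show ?thesis by simp
qed

lemma has_bochner_integral_cis_heat_kernel: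
  fixes k :: "real^3"
  assumes "D > 0"
  shows "has_bochner_integral lborel (\<lambda>z. cis (- (k \<bullet> z)) * complex_of_real (heat_kernel D z))
           (complex_of_real (exp (- D * (norm k)\<^sup>2)))"
  using has_bochner_integral_cis_gaussian_euclidean[OF assms, of k]
  by (simp add: heat_kernel_def)

lemma integrable_heat_kernel:
  assumes "D > 0"
  shows "integrable lborel (heat_kernel D)"
  using has_bochner_integral_Re[OF has_bochner_integral_cis_heat_kernel[OF assms, of 0]]
  by (simp add: has_bochner_integral_iff)

lemma lborel_integrable_translate:
  fixes g :: "'a::euclidean_space \<Rightarrow> 'b::{banach, second_countable_topology}"
  assumes "integrable lborel g"
  shows "integrable lborel (\<lambda>x. g (c + x))"
proof -
  have "g \<in> borel_measurable borel" using assms by auto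
  moreover have "integrable (distr lborel borel ((+) c)) g" using assms by (simp add: lborel_distr_plus)
  ultimately show ?thesis by (subst (asm) integrable_distr_eq) auto
qed

lemma lborel_integral_translate:
  fixes g :: "'a::euclidean_space \<Rightarrow> 'b::{banach, second_countable_topology}"
  assumes "g \<in> borel_measurable borel"
  shows "(\<integral>x. g (c + x) \<partial>lborel) = (\<integral>x. g x \<partial>lborel)"
proof -
  have "(\<integral>x. g x \<partial>lborel) = (\<integral>x. g x \<partial>distr lborel borel ((+) c))"
    by (simp add: lborel_distr_plus)
  also have "\<dots> = (\<integral>x. g (c + x) \<partial>lborel)" using assms by (subst integral_distr) auto
  finally show ?thesis by simp
qed

lemma fourier3_convolution:
  fixes K f :: "real^3 \<Rightarrow> real"
  assumes K: "integrable lborel K" and f: "integrable lborel f"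
  shows "fourier3 (\<lambda>x. \<integral>y. K (x - y) * f y \<partial>lborel) k = fourier3 K k * fourier3 f k"
proof -
  have P: "pair_sigma_finite (lborel :: (real^3) measure) (lborel :: (real^3) measure)" ..
  have [measurable]: "K \<in> borel_measurable borel" "f \<in> borel_measurable borel"
    using K f by auto
  define \<Psi> where "\<Psi> y x = cis (- (k \<bullet> x)) * complex_of_real (K (x - y) * f y)" for y x :: "real^3"
  have \<Psi>_shift: "\<Psi> y (y + x)
      = (cis (- (k \<bullet> x)) * complex_of_real (K x)) * (cis (- (k \<bullet> y)) * complex_of_real (f y))"
    for x y
    unfolding \<Psi>_def inner_add_right minus_add cis_mult[symmetric] by (simp add: mult_ac)
  have K_cis: "integrable lborel (\<lambda>x. cis (- (k \<bullet> x)) * complex_of_real (K x))"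
    using integrable_cis_mult[OF K, of "- k"] by simp
  have inner_integrable: "integrable lborel (\<Psi> y)" for y
    using lborel_integrable_translate[of "\<lambda>x. \<Psi> y (y + x)" "- y"] K_cis
    by (simp add: \<Psi>_shift)
  have inner_norm: "(\<integral>x. norm (\<Psi> y x) \<partial>lborel) = (\<integral>x. \<bar>K x\<bar> \<partial>lborel) * \<bar>f y\<bar>" for y
  proof -
    have "(\<integral>x. norm (\<Psi> y x) \<partial>lborel) = (\<integral>x. \<bar>K (- y + x)\<bar> * \<bar>f y\<bar> \<partial>lborel)"
      unfolding \<Psi>_def by (simp add: norm_mult abs_mult)
    also have "\<dots> = (\<integral>x. \<bar>K x\<bar> * \<bar>f y\<bar> \<partial>lborel)"
      by (rule lborel_integral_translate) measurable
    finally show ?thesis by simp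
  qed
  have product_integrable: "integrable (lborel \<Otimes>\<^sub>M lborel) (case_prod \<Psi>)"
  proof (rule pair_sigma_finite.Fubini_integrable[OF P])
    show "case_prod \<Psi> \<in> borel_measurable (lborel \<Otimes>\<^sub>M lborel)"
      unfolding \<Psi>_def by measurable
  qed (use f inner_integrable in \<open>simp_all add: inner_norm\<close>)
  have "fourier3 (\<lambda>x. \<integral>y. K (x - y) * f y \<partial>lborel) k = (\<integral>x. (\<integral>y. \<Psi> y x \<partial>lborel) \<partial>lborel)"
    by (simp add: fourier3_def \<Psi>_def integral_complex_of_real[symmetric])
  also have "\<dots> = (\<integral>y. (\<integral>x. \<Psi> y x \<partial>lborel) \<partial>lborel)"
    by (rule pair_sigma_finite.Fubini_integral[OF P product_integrable])
  also have "\<dots> = (\<integral>y. fourier3 K k * (cis (- (k \<bullet> y)) * complex_of_real (f y)) \<partial>lborel)"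
  proof (intro Bochner_Integration.integral_cong refl)
    fix y
    have "(\<integral>x. \<Psi> y x \<partial>lborel) = (\<integral>x. \<Psi> y (y + x) \<partial>lborel)"
      by (rule lborel_integral_translate[symmetric]) (simp add: \<Psi>_def)
    then show "(\<integral>x. \<Psi> y x \<partial>lborel) = fourier3 K k * (cis (- (k \<bullet> y)) * complex_of_real (f y))"
      by (simp add: \<Psi>_shift fourier3_def)
  qed
  also have "\<dots> = fourier3 K k * fourier3 f k"
    by (simp add: fourier3_def)
  finally show ?thesis .
qed

lemma fourier3_heat_smooth:
  assumes "D > 0" and "integrable lborel f"
  shows "fourier3 (heat_smooth D f) k = complex_of_real (exp (- D * (norm k)\<^sup>2)) * fourier3 f k"
proof -
  have "fourier3 (heat_kernel D) k = complex_of_real (exp (- D * (norm k)\<^sup>2))"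
    using has_bochner_integral_cis_heat_kernel[OF assms(1), of k]
    by (simp add: fourier3_def has_bochner_integral_iff)
  then show ?thesis
    using fourier3_convolution[OF integrable_heat_kernel[OF assms(1)] assms(2)]
    by (simp add: heat_smooth_def[abs_def])
qed

section \<open>The symbol is an entire function of the radius\<close>

text \<open>\<open>sinc_sqrt w = sin (\<surd>w) / \<surd>w\<close>, an entire function of \<open>w\<close>.\<close>

definition sinc_sqrt_coeff :: "nat \<Rightarrow> complex" where
  "sinc_sqrt_coeff n = (-1) ^ n / fact (2 * n + 1)"

definition sinc_sqrt :: "complex \<Rightarrow> complex" where
  "sinc_sqrt w = (\<Sum>n. sinc_sqrt_coeff n * w ^ n)"

lemma summable_sinc_sqrt: "summable (\<lambda>n. sinc_sqrt_coeff n * w ^ n)"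
proof (rule summable_comparison_test[OF _ summable_exp_generic[of "norm w"]])
  have "norm (sinc_sqrt_coeff n * w ^ n) \<le> norm w ^ n /\<^sub>R fact n" for n
  proof -
    have "fact n \<le> (fact (2 * n + 1) :: real)" by (intro fact_mono) auto
    then have "norm w ^ n / fact (2 * n + 1) \<le> norm w ^ n / fact n"
      by (intro divide_left_mono) auto
    then show ?thesis
      by (simp add: sinc_sqrt_coeff_def norm_mult norm_divide norm_power norm_fact norm_inverse
          divide_inverse_commute del: fact_Suc)
  qed
  then show "\<exists>N. \<forall>n\<ge>N. norm (sinc_sqrt_coeff n * w ^ n) \<le> norm w ^ n /\<^sub>R fact n" by blast
qed

lemma holomorphic_sinc_sqrt: "sinc_sqrt holomorphic_on UNIV"
proof -
  have "(sinc_sqrt has_field_derivative (\<Sum>n. diffs sinc_sqrt_coeff n * z ^ n)) (at z)" for z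
    unfolding sinc_sqrt_def[abs_def] by (rule termdiffs_strong_converges_everywhere[OF summable_sinc_sqrt])
  then show ?thesis
    unfolding holomorphic_on_def field_differentiable_def by (auto intro: has_field_derivative_at_within)
qed

lemma holomorphic_on_sinc_sqrt_compose [holomorphic_intros]:
  "g holomorphic_on S \<Longrightarrow> (\<lambda>z. sinc_sqrt (g z)) holomorphic_on S"
  using holomorphic_on_compose_gen[of g S sinc_sqrt UNIV] holomorphic_sinc_sqrt by (simp add: o_def)

lemma sinc_sqrt_0 [simp]: "sinc_sqrt 0 = 1"
  by (simp only: sinc_sqrt_def powser_zero) (simp add: sinc_sqrt_coeff_def)

lemma sin_eq_sinc_sqrt: "sin u = u * sinc_sqrt (u\<^sup>2)"
proof -
  let ?f = "\<lambda>m. sin_coeff m *\<^sub>R u ^ m"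
  have odd_terms: "?f m = 0" if "m \<notin> range (\<lambda>n::nat. 2 * n + 1)" for m
    using that by (auto simp: sin_coeff_def elim!: oddE)
  have "(\<lambda>n. ?f (2 * n + 1)) sums sin u"
    using sums_mono_reindex[of "\<lambda>n. 2 * n + 1" ?f] odd_terms sin_converges[of u]
    by (simp add: strict_mono_def)
  moreover have "?f (2 * n + 1) = u * (sinc_sqrt_coeff n * (u\<^sup>2) ^ n)" for n
    by (simp add: sin_coeff_def sinc_sqrt_coeff_def scaleR_conv_of_real power_mult[symmetric]
        del: fact_Suc)
  ultimately have "(\<lambda>n. u * (sinc_sqrt_coeff n * (u\<^sup>2) ^ n)) sums sin u" by simp
  moreover have "(\<lambda>n. u * (sinc_sqrt_coeff n * (u\<^sup>2) ^ n)) sums (u * sinc_sqrt (u\<^sup>2))"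
    unfolding sinc_sqrt_def by (intro sums_mult summable_sums summable_sinc_sqrt)
  ultimately show ?thesis using sums_unique2 by blast
qed

lemma sin_real_eq_sinc_sqrt:
  "complex_of_real (sin x) = complex_of_real x * sinc_sqrt (complex_of_real (x\<^sup>2))"
  using sin_eq_sinc_sqrt[of "complex_of_real x"] by (simp add: sin_of_real)

lemma sinh_real_eq_sinc_sqrt:
  "complex_of_real (sinh x) = complex_of_real x * sinc_sqrt (complex_of_real (- x\<^sup>2))"
proof -
  have "complex_of_real (sinh x) = - \<i> * sin (\<i> * complex_of_real x)"
    using sinh_real[of x] by (simp add: sinh_def exp_minus divide_simps)
  also have "\<dots> = complex_of_real x * sinc_sqrt (complex_of_real (- x\<^sup>2))"
    by (simp add: sin_eq_sinc_sqrt power_mult_distrib mult.assoc[symmetric])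
  finally show ?thesis .
qed

lemma of_real_square_quotient:
  assumes "complex_of_real s = complex_of_real (\<theta> * T) * z" "\<theta> \<noteq> 0"
  shows "complex_of_real (s\<^sup>2 / \<theta>\<^sup>2) = complex_of_real (T\<^sup>2) * z\<^sup>2"
proof -
  have "complex_of_real (s\<^sup>2 / \<theta>\<^sup>2) = (complex_of_real s)\<^sup>2 / (complex_of_real \<theta>)\<^sup>2"
    by simp
  also have "\<dots> = complex_of_real (T\<^sup>2) * z\<^sup>2"
    unfolding assms(1) using assms(2) by (simp add: power_mult_distrib)
  finally show ?thesis .
qed

lemma J_symbol_eq_sinc_sqrt:
  assumes "c0 > 0" "kc > 0" "r \<ge> 0"
  shows "complex_of_real (J_symbol c0 kc T r)
       = complex_of_real (T\<^sup>2) * (sinc_sqrt (complex_of_real (T\<^sup>2 * (c0\<^sup>2 * r\<^sup>2 * (1 - r\<^sup>2 / kc\<^sup>2)))))\<^sup>2"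
proof (cases "r \<le> kc")
  case True
  define \<theta> where "\<theta> = c0 * r * sqrt (1 - r\<^sup>2 / kc\<^sup>2)"
  have "r\<^sup>2 \<le> kc\<^sup>2" using True assms by (intro power_mono) auto
  then have "1 - r\<^sup>2 / kc\<^sup>2 \<ge> 0" using assms by (simp add: field_simps)
  then have \<theta>_sq: "(\<theta> * T)\<^sup>2 = T\<^sup>2 * (c0\<^sup>2 * r\<^sup>2 * (1 - r\<^sup>2 / kc\<^sup>2))"
    unfolding \<theta>_def by (simp add: power_mult_distrib)
  have J: "J_symbol c0 kc T r = (if \<theta> = 0 then T\<^sup>2 else (sin (\<theta> * T))\<^sup>2 / \<theta>\<^sup>2)"
    unfolding J_symbol_def \<theta>_def using True by (simp add: Let_def)
  show ?thesis
  proof (cases "\<theta> = 0")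
    case True
    then have zero: "T\<^sup>2 * (c0\<^sup>2 * r\<^sup>2 * (1 - r\<^sup>2 / kc\<^sup>2)) = 0" using \<theta>_sq by simp
    show ?thesis unfolding zero J using True by simp
  next
    case False
    show ?thesis
      unfolding \<theta>_sq[symmetric] J if_not_P[OF False]
      by (rule of_real_square_quotient[OF sin_real_eq_sinc_sqrt False])
  qed
next
  case False
  define \<theta> where "\<theta> = c0 * r * sqrt (r\<^sup>2 / kc\<^sup>2 - 1)"
  have "kc\<^sup>2 < r\<^sup>2" using False assms by (intro power_strict_mono) auto
  then have pos: "r\<^sup>2 / kc\<^sup>2 - 1 > 0" using assms by (simp add: field_simps)
  then have "\<theta> \<noteq> 0" unfolding \<theta>_def using assms False by auto
  moreover have "- (\<theta> * T)\<^sup>2 = T\<^sup>2 * (c0\<^sup>2 * r\<^sup>2 * (1 - r\<^sup>2 / kc\<^sup>2))"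
    unfolding \<theta>_def using pos by (simp add: power_mult_distrib algebra_simps)
  moreover have "J_symbol c0 kc T r = (sinh (\<theta> * T))\<^sup>2 / \<theta>\<^sup>2"
    unfolding J_symbol_def \<theta>_def using False by (simp add: Let_def)
  ultimately show ?thesis
    using of_real_square_quotient[OF sinh_real_eq_sinc_sqrt] by metis
qed

lemma negligible_sphere_null_sets: "sphere (a::'a::euclidean_space) r \<in> null_sets lborel"
  using negligible_sphere[of a r]
  by (auto simp: null_sets_completion_iff negligible_iff_null_sets)

lemma AE_entire_of_norm_nonzero:
  fixes \<Phi> :: "complex \<Rightarrow> complex"
  assumes holo: "\<Phi> holomorphic_on UNIV" and "\<Phi> 0 \<noteq> 0"
  shows "AE k in lborel. \<Phi> (complex_of_real (norm (k::'a::euclidean_space))) \<noteq> 0"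
proof -
  have "countable {z. \<Phi> z = 0}"
  proof (cases "\<Phi> constant_on UNIV")
    case True
    then have "{z. \<Phi> z = 0} = {}"
      using assms(2) unfolding constant_on_def by auto
    then show ?thesis by simp
  next
    case False
    then show ?thesis using holomorphic_countable_zeros[OF holo] by (simp add: connected_UNIV)
  qed
  then have "(\<Union>\<rho>\<in>Re ` {z. \<Phi> z = 0}. sphere (0::'a) \<rho>) \<in> null_sets lborel"
    by (intro null_sets_UN' negligible_sphere_null_sets) auto
  moreover have "{k \<in> space lborel. \<not> \<Phi> (complex_of_real (norm k)) \<noteq> 0}
      \<subseteq> (\<Union>\<rho>\<in>Re ` {z. \<Phi> z = 0}. sphere (0::'a) \<rho>)"
  proof
    fix k :: 'a assume "k \<in> {k \<in> space lborel. \<not> \<Phi> (complex_of_real (norm k)) \<noteq> 0}"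
    then have "norm k \<in> Re ` {z. \<Phi> z = 0}"
      by (intro image_eqI[of _ _ "complex_of_real (norm k)"]) auto
    then show "k \<in> (\<Union>\<rho>\<in>Re ` {z. \<Phi> z = 0}. sphere 0 \<rho>)" by auto
  qed
  ultimately show ?thesis by (rule AE_I')
qed

lemma AE_A_symbol_nonzero:
  assumes c0: "c0 > 0" and kc: "kc > 0"
  shows "AE k in lborel. A_symbol c0 \<tau>1 kc T k \<noteq> 0"
proof -
  define \<Phi> where "\<Phi> z = (1 + complex_of_real (\<tau>1\<^sup>2 * c0\<^sup>2) * (- z\<^sup>2))\<^sup>2
      + complex_of_real (c0\<^sup>2) * (- z\<^sup>2) * (complex_of_real (T\<^sup>2) *
        (sinc_sqrt (complex_of_real (T\<^sup>2) * (complex_of_real (c0\<^sup>2) * z\<^sup>2 * (1 - z\<^sup>2 / complex_of_real (kc\<^sup>2)))))\<^sup>2)"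
    for z
  have A_eq: "complex_of_real (A_symbol c0 \<tau>1 kc T k) = \<Phi> (complex_of_real (norm k))"
    for k :: "real^3"
    unfolding A_symbol_def \<Phi>_def using J_symbol_eq_sinc_sqrt[OF c0 kc norm_ge_zero[of k], of T]
    by simp
  have "AE k in lborel. \<Phi> (complex_of_real (norm (k :: real^3))) \<noteq> 0"
    using kc by (intro AE_entire_of_norm_nonzero) (auto simp: \<Phi>_def intro!: holomorphic_intros)
  then show ?thesis by eventually_elim (metis A_eq of_real_0)
qed

lemma integrable_if_square_integrable_bounded_support:
  fixes f :: "'a::euclidean_space \<Rightarrow> real"
  assumes f: "f \<in> borel_measurable lborel" "integrable lborel (\<lambda>x. (f x)\<^sup>2)"
    and \<Omega>: "\<Omega> \<in> sets lborel" "bounded \<Omega>" and outside: "\<And>x. x \<notin> \<Omega> \<Longrightarrow> f x = 0"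
  shows "integrable lborel f"
proof (rule Bochner_Integration.integrable_bound)
  have "integrable lborel (indicator \<Omega> :: 'a \<Rightarrow> real)"
    using emeasure_bounded_finite[OF \<Omega>(2)] \<Omega>(1) by (simp add: less_top[symmetric])
  then show "integrable lborel (\<lambda>x. indicator \<Omega> x + (f x)\<^sup>2)" using f by simp
  have "\<bar>f x\<bar> \<le> indicator \<Omega> x + (f x)\<^sup>2" for x
  proof (cases "x \<in> \<Omega>")
    case True
    have "\<bar>f x\<bar> \<le> 1 + (f x)\<^sup>2"
    proof (cases "\<bar>f x\<bar> \<le> 1")
      case False
      then have "\<bar>f x\<bar> * 1 \<le> \<bar>f x\<bar> * \<bar>f x\<bar>" by (intro mult_left_mono) auto
      then show ?thesis by (simp add: power2_eq_square abs_mult_self_eq)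
    qed (smt (verit) zero_le_power2)
    then show ?thesis using True by simp
  qed (simp add: outside)
  then show "AE x in lborel. norm (f x) \<le> norm (indicator \<Omega> x + (f x)\<^sup>2)"
    by (simp add: order_trans[OF _ abs_ge_self])
qed (use f in simp)

lemma continuous_fourier3:
  assumes f: "integrable lborel f"
  shows "continuous_on UNIV (fourier3 f)"
proof (intro continuous_at_imp_continuous_on ballI)
  have [measurable]: "f \<in> borel_measurable borel" using f by auto
  fix k :: "real^3"
  show "isCont (fourier3 f) k"
    unfolding continuous_at_sequentially
  proof (intro allI impI)
    fix X :: "nat \<Rightarrow> real^3" assume X: "X \<longlonglongrightarrow> k"
    show "(fourier3 f \<circ> X) \<longlonglongrightarrow> fourier3 f k"
      unfolding o_def fourier3_def
    proof (rule integral_dominated_convergence[where w="\<lambda>x. norm (f x)"])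
      show "AE x in lborel. (\<lambda>n. cis (- (X n \<bullet> x)) * complex_of_real (f x))
          \<longlonglongrightarrow> cis (- (k \<bullet> x)) * complex_of_real (f x)"
        using X unfolding cis_conv_exp by (intro AE_I2 tendsto_intros)
    qed (use f in \<open>auto simp: norm_mult\<close>)
  qed
qed

lemma continuous_AE_zero_imp_zero:
  fixes u :: "'a::euclidean_space \<Rightarrow> 'b::real_normed_vector"
  assumes u: "continuous_on UNIV u" and "AE x in lborel. u x = 0"
  shows "u x = 0"
proof (rule ccontr)
  assume "u x \<noteq> 0"
  obtain N where N: "N \<in> null_sets lborel" "{x. u x \<noteq> 0} \<subseteq> N"
    using assms(2) unfolding eventually_ae_filter by auto
  have "open {x. u x \<noteq> 0}"
    using open_vimage[of "- {0}" u] u by (simp add: vimage_def open_Compl)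
  moreover have "negligible {x. u x \<noteq> 0}"
    using N negligible_iff_null_sets null_sets_completionI[OF N(1)]
    by (auto intro: negligible_subset)
  ultimately show False using open_not_negligible \<open>u x \<noteq> 0\<close> by blast
qed

lemma integrable_if_L2_on:
  assumes "open \<Omega>" "bounded \<Omega>" "f \<in> L2_on \<Omega>"
  shows "integrable lborel f"
proof (rule integrable_if_square_integrable_bounded_support[where \<Omega>=\<Omega>])
qed (use assms in \<open>auto simp: L2_on_def\<close>)

lemma AE_eq_if_fourier3_eq:
  assumes f: "integrable lborel f" and g: "integrable lborel g" and "bounded \<Omega>"
    and outside: "\<And>x. x \<notin> \<Omega> \<Longrightarrow> f x = g x"
    and fourier_eq: "\<And>k. fourier3 f k = fourier3 g k"
  shows "AE x in lborel. f x = g x"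
proof -
  have "(\<integral>x. cis (w \<bullet> x) * complex_of_real (f x - g x) \<partial>lborel) = fourier3 f (- w) - fourier3 g (- w)"
    for w
    using integrable_cis_mult[OF f, of w] integrable_cis_mult[OF g, of w]
    by (simp add: fourier3_def right_diff_distrib)
  moreover have "f x - g x = 0" if "x \<notin> closure \<Omega>" for x
    using that closure_subset outside by (metis diff_self subsetD)
  ultimately have "AE x in lborel. f x - g x = 0"
    using f g fourier_eq \<open>bounded \<Omega>\<close>
    by (intro fourier_uniqueness_compact_support[where K="closure \<Omega>"]) (auto simp: compact_closure)
  then show ?thesis by auto
qed

theorem proposition5p2:
  fixes \<Omega> :: "(real^3) set" and c0 \<tau>1 \<epsilon> T kc D :: real
  assumes "open \<Omega>" and "bounded \<Omega>"
    and "c0 > 0" and "\<tau>1 > 0" and "\<epsilon> > 0" and "T > 0"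
    and "kc = 2 / (\<tau>1 * c0)"
    and "D = 2 * (c0 / kc + \<epsilon>) * T"
    and "f \<in> L2_on \<Omega>" and "g \<in> L2_on \<Omega>"
    and "AE k in lborel.
           complex_of_real (A_symbol c0 \<tau>1 kc T k) * fourier3 (heat_smooth D f) k
         = complex_of_real (A_symbol c0 \<tau>1 kc T k) * fourier3 (heat_smooth D g) k"
  shows "AE x in lborel. f x = g x"
proof -
  have kc: "kc > 0" and D: "D > 0"
    using assms(3-8) by (simp_all add: add_pos_pos)
  have f: "integrable lborel f" and g: "integrable lborel g"
    using assms(1,2,9,10) by (simp_all add: integrable_if_L2_on)
  have "AE k in lborel. fourier3 f k - fourier3 g k = 0"
    using assms(11) AE_A_symbol_nonzero[OF assms(3) kc, of \<tau>1 T]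
    by eventually_elim (simp add: fourier3_heat_smooth[OF D f] fourier3_heat_smooth[OF D g])
  then have "fourier3 f k - fourier3 g k = 0" for k
    using continuous_fourier3[OF f] continuous_fourier3[OF g]
    by (intro continuous_AE_zero_imp_zero continuous_intros)
  moreover have "f x = g x" if "x \<notin> \<Omega>" for x
    using that assms(9,10) by (simp add: L2_on_def)
  ultimately show ?thesis
    using AE_eq_if_fourier3_eq[OF f g assms(2)] by simp
qed

end
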